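(* Let $G$ be a residually finite group and let $A$ be a finite set. Suppose that $X \subset A^G$ is a strongly irreducible subshift of finite type and that there exists a periodic configuration in $X$. Then the set of periodic configurations of $X$ is dense in $X$.
   Context: $A^G=\{x\colon G\to A\}$ carries the prodiscrete topology (product of discrete topologies) and the $G$-shift action $(gx)(h)=x(g^{-1}h)$ for $g,h\in G$. A subshift is a closed $G$-invariant subset of $A^G$. A configuration $x$ is periodic if its $G$-orbit is finite. For a finite $\Omega\subset G$ and $x\in A^G$, $x|_\Omega$ denotes the restriction. A subshift $X$ is of finite type if there are a finite $\Omega\subset G$ and $\mathcal P\subset A^\Omega$ with $X=\{x\in A^G : (gx)|_\Omega\in\mathcal P \text{ for all } g\in G\}$. For finite $\Delta\subset G$, $X$ is $\Delta$-irreducible if whenever $\Omega_1,\Omega_2$ are finite subsets of $G$ with $\Omega_1\Delta^{-1}\cap\Omega_2=\varnothing$ and $x_1,x_2\in X$, there is $x\in X$ with $x|_{\Omega_1}=x_1|_{\Omega_1}$ and $x|_{\Omega_2}=x_2|_{\Omega_2}$. $X$ is strongly irreducible if it is $\Delta$-irreducible for some finite $\Delta\subset G$. A group is residually finite if the intersection of its finite-index subgroups is trivial. *)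

theory Defs
  imports "HOL-Analysis.Analysis"
begin

text \<open>The group G is a type of class group_add (a not necessarily commutative
group, written additively); the alphabet A is a finite type.\<close>

definition prodiscrete :: "('g \<Rightarrow> 'a) topology" where
  "prodiscrete = product_topology (\<lambda>_. discrete_topology UNIV) UNIV"

definition shift :: "'g::group_add \<Rightarrow> ('g \<Rightarrow> 'a) \<Rightarrow> ('g \<Rightarrow> 'a)" where
  "shift g x = (\<lambda>h. x (- g + h))"

definition subshift :: "('g::group_add \<Rightarrow> 'a) set \<Rightarrow> bool" where
  "subshift X \<longleftrightarrow> closedin prodiscrete X \<and> (\<forall>g. \<forall>x\<in>X. shift g x \<in> X)"

definition periodic_config :: "('g::group_add \<Rightarrow> 'a) \<Rightarrow> bool" where
  "periodic_config x \<longleftrightarrow> finite (range (\<lambda>g. shift g x))"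

definition finite_type :: "('g::group_add \<Rightarrow> 'a) set \<Rightarrow> bool" where
  "finite_type X \<longleftrightarrow> (\<exists>\<Omega> P. finite \<Omega> \<and> P \<subseteq> (\<Omega> \<rightarrow>\<^sub>E UNIV) \<and>
      X = {x. \<forall>g. restrict (shift g x) \<Omega> \<in> P})"

definition irreducible_wrt :: "'g::group_add set \<Rightarrow> ('g \<Rightarrow> 'a) set \<Rightarrow> bool" where
  "irreducible_wrt \<Delta> X \<longleftrightarrow>
     (\<forall>\<Omega>1 \<Omega>2. finite \<Omega>1 \<longrightarrow> finite \<Omega>2 \<longrightarrow>
        {a + - d | a d. a \<in> \<Omega>1 \<and> d \<in> \<Delta>} \<inter> \<Omega>2 = {} \<longrightarrow>
        (\<forall>x1\<in>X. \<forall>x2\<in>X. \<exists>x\<in>X. restrict x \<Omega>1 = restrict x1 \<Omega>1 \<and>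
                                  restrict x \<Omega>2 = restrict x2 \<Omega>2))"

definition strongly_irreducible :: "('g::group_add \<Rightarrow> 'a) set \<Rightarrow> bool" where
  "strongly_irreducible X \<longleftrightarrow> (\<exists>\<Delta>. finite \<Delta> \<and> irreducible_wrt \<Delta> X)"

definition is_subgroup :: "'g::group_add set \<Rightarrow> bool" where
  "is_subgroup H \<longleftrightarrow> 0 \<in> H \<and> (\<forall>a\<in>H. \<forall>b\<in>H. a + b \<in> H) \<and> (\<forall>a\<in>H. - a \<in> H)"

definition finite_index :: "'g::group_add set \<Rightarrow> bool" where
  "finite_index H \<longleftrightarrow> finite {(\<lambda>h. g + h) ` H | g. True}"

definition residually_finite :: "'g::group_add itself \<Rightarrow> bool" where
  "residually_finite _ \<longleftrightarrow> \<Inter>{H :: 'g set. is_subgroup H \<and> finite_index H} = {0}"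

end

theory Submission
  imports Defs
begin

text \<open>Given \<open>x \<in> X\<close>, a finite window \<open>F\<close> and a periodic \<open>p \<in> X\<close>, strong irreducibility
yields \<open>z \<in> X\<close> agreeing with \<open>x\<close> on \<open>F\<close> and with \<open>p\<close> on a collar around \<open>F\<close>, wide enough
to contain every pattern window meeting \<open>F\<close>. Residual finiteness gives a finite-index subgroup
\<open>H\<close> fixing \<open>p\<close> whose translates of the collared region \<open>D\<close> are pairwise disjoint. Copying
\<open>z|\<^sub>D\<close> onto every translate \<open>h + D\<close> and filling the rest with \<open>p\<close> gives an \<open>H\<close>-invariant,
hence periodic, configuration; every pattern window sees either a translate of \<open>z\<close> or of
\<open>p\<close>, so it lies in \<open>X\<close>.\<close>

lemma in_prodiscrete_closure_ofI:
  fixes x :: "'g \<Rightarrow> 'a"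
  assumes "\<And>F. finite F \<Longrightarrow> \<exists>y\<in>S. \<forall>k\<in>F. y k = x k"
  shows "x \<in> prodiscrete closure_of S"
  unfolding in_closure_of prodiscrete_def
proof (intro conjI allI impI)
  show "x \<in> topspace (product_topology (\<lambda>_. discrete_topology UNIV) UNIV)" by simp
  fix T assume "x \<in> T \<and> openin (product_topology (\<lambda>_::'g. discrete_topology (UNIV::'a set)) UNIV) T"
  then obtain U where U: "finite {i. U i \<noteq> UNIV}" "x \<in> Pi\<^sub>E UNIV U" "Pi\<^sub>E UNIV U \<subseteq> T"
    unfolding openin_product_topology_alt by auto
  then obtain y where y: "y \<in> S" "\<forall>k\<in>{i. U i \<noteq> UNIV}. y k = x k" using assms by blast
  have "y \<in> Pi\<^sub>E UNIV U" using U(2) y(2) by (auto simp: PiE_iff) (metis UNIV_I)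
  then show "\<exists>y. y \<in> S \<and> y \<in> T" using U(3) y(1) by blast
qed

lemma shift_add: "shift (a + b) x = shift a (shift b x)"
  unfolding shift_def fun_eq_iff by (metis minus_add add.assoc)

lemma shift_0 [simp]: "shift 0 x = x"
  by (simp add: shift_def)

lemma finite_type_windowE:
  assumes "finite_type X"
  obtains \<Omega> P where "finite \<Omega>" "\<And>x. x \<in> X \<longleftrightarrow> (\<forall>a. (\<lambda>w\<in>\<Omega>. x (a + w)) \<in> P)"
proof -
  obtain \<Omega> P where \<Omega>: "finite \<Omega>" and X: "X = {x. \<forall>g. restrict (shift g x) \<Omega> \<in> P}"
    using assms unfolding finite_type_def by blast
  have "(\<forall>g. restrict (shift g x) \<Omega> \<in> P) \<longleftrightarrow> (\<forall>a. (\<lambda>w\<in>\<Omega>. x (a + w)) \<in> P)" for x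
    unfolding shift_def by (metis minus_minus)
  with \<Omega> X that show thesis by blast
qed

lemma is_subgroup_Int: "is_subgroup H \<Longrightarrow> is_subgroup K \<Longrightarrow> is_subgroup (H \<inter> K)"
  by (auto simp: is_subgroup_def)

lemma finite_index_Int:
  fixes H K :: "'g::group_add set"
  assumes "finite_index H" "finite_index K"
  shows "finite_index (H \<inter> K)"
proof -
  have "{(\<lambda>h. g + h) ` (H \<inter> K) | g. True} \<subseteq>
        (\<lambda>(A, B). A \<inter> B) ` ({(\<lambda>h. g + h) ` H | g. True} \<times> {(\<lambda>h. g + h) ` K | g. True})"
    by (auto simp: image_Int image_iff)
  then show ?thesis
    using assms unfolding finite_index_def by (meson finite_SigmaI finite_imageI finite_subset)
qed

lemma finite_index_UNIV: "finite_index (UNIV :: 'g::group_add set)"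
proof -
  have "(\<lambda>h. g + h) ` (UNIV :: 'g set) = UNIV" for g
    by (metis surj_def add_minus_cancel)
  then show ?thesis unfolding finite_index_def by simp
qed

lemma residually_finite_subgroup_avoiding:
  fixes S :: "'g::group_add set"
  assumes "residually_finite TYPE('g)" "finite S" "0 \<notin> S"
  obtains H where "is_subgroup H" "finite_index H" "H \<inter> S = {}"
proof -
  have "\<exists>H. is_subgroup H \<and> finite_index H \<and> H \<inter> S = {}"
    using assms(2,3)
  proof (induction S rule: finite_induct)
    case empty
    then show ?case using finite_index_UNIV by (auto simp: is_subgroup_def)
  next
    case (insert s S)
    then obtain H where H: "is_subgroup H" "finite_index H" "H \<inter> S = {}" by auto
    from insert.prems assms(1) obtain K where K: "is_subgroup K" "finite_index K" "s \<notin> K"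
      unfolding residually_finite_def by auto
    show ?case
      using H K is_subgroup_Int finite_index_Int by (intro exI[of _ "H \<inter> K"]) auto
  qed
  with that show thesis by blast
qed

lemma is_subgroup_stabiliser: "is_subgroup {g. shift g x = x}"
  unfolding is_subgroup_def by (auto simp: shift_add) (metis shift_add add.left_inverse shift_0)

lemma finite_index_stabiliser:
  assumes "periodic_config x"
  shows "finite_index {g. shift g x = x}"
proof -
  let ?S = "{g. shift g x = x}"
  have "(\<lambda>h. g + h) ` ?S = {k. shift k x = shift g x}" for g
  proof safe
    fix k assume k: "shift k x = shift g x"
    have "shift (- g + k) x = shift (- g + g) x" by (simp only: shift_add k)
    then have "shift (- g + k) x = x" by simp
    moreover have "k = g + (- g + k)" by (simp add: add.assoc[symmetric])
    ultimately show "k \<in> (\<lambda>h. g + h) ` ?S" by blast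
  qed (simp add: shift_add)
  then have "{(\<lambda>h. g + h) ` ?S | g. True} = (\<lambda>q. {k. shift k x = q}) ` range (\<lambda>g. shift g x)"
    by auto
  with assms show ?thesis unfolding finite_index_def periodic_config_def by simp
qed

lemma periodic_configI:
  assumes "is_subgroup H" "finite_index H" "\<And>h. h \<in> H \<Longrightarrow> shift h x = x"
  shows "periodic_config x"
proof -
  have "shift g x = shift (SOME g'. g' \<in> (\<lambda>h. g + h) ` H) x" for g
  proof -
    have "g \<in> (\<lambda>h. g + h) ` H" using assms(1) unfolding is_subgroup_def by force
    then obtain h where "h \<in> H" "(SOME g'. g' \<in> (\<lambda>h. g + h) ` H) = g + h"
      by (metis (no_types, lifting) imageE someI)
    then show ?thesis by (simp add: shift_add assms(3))
  qed
  then have "range (\<lambda>g. shift g x) \<subseteq> (\<lambda>c. shift (SOME g. g \<in> c) x) ` {(\<lambda>h. g + h) ` H | g. True}"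
    by blast
  with assms(2) show ?thesis
    unfolding periodic_config_def finite_index_def by (meson finite_imageI finite_subset)
qed

text \<open>The \<open>THE\<close> below is well defined once \<open>D\<close> meets every coset \<open>H + d\<close> at most once.\<close>

definition glue :: "'g::group_add set \<Rightarrow> 'g set \<Rightarrow> ('g \<Rightarrow> 'a) \<Rightarrow> ('g \<Rightarrow> 'a) \<Rightarrow> 'g \<Rightarrow> 'a" where
  "glue H D z p k =
     (if \<exists>h\<in>H. - h + k \<in> D then z (- (THE h. h \<in> H \<and> - h + k \<in> D) + k) else p k)"

lemma glue_translate:
  assumes H: "is_subgroup H"
    and sep: "\<And>d d'. d \<in> D \<Longrightarrow> d' \<in> D \<Longrightarrow> d + - d' \<in> H \<Longrightarrow> d = d'"
    and "h \<in> H" "- h + k \<in> D"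
  shows "glue H D z p k = z (- h + k)"
proof -
  have "h' = h" if "h' \<in> H" "- h' + k \<in> D" for h'
  proof -
    have "(- h' + k) + - (- h + k) = - h' + h" by (simp add: minus_add add.assoc)
    also have "\<dots> \<in> H" using H \<open>h \<in> H\<close> \<open>h' \<in> H\<close> unfolding is_subgroup_def by blast
    finally have "- h' + k = - h + k" using sep that assms(4) by blast
    then show "h' = h" by simp
  qed
  then have "(THE h'. h' \<in> H \<and> - h' + k \<in> D) = h" using assms(3,4) by blast
  with assms(3,4) show ?thesis unfolding glue_def by auto
qed

lemma glue_outside:
  "\<not> (\<exists>h\<in>H. - h + k \<in> D) \<Longrightarrow> glue H D z p k = p k"
  unfolding glue_def by simp

lemma shift_glue:
  assumes H: "is_subgroup H"
    and sep: "\<And>d d'. d \<in> D \<Longrightarrow> d' \<in> D \<Longrightarrow> d + - d' \<in> H \<Longrightarrow> d = d'"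
    and p: "\<And>h. h \<in> H \<Longrightarrow> shift h p = p"
    and h: "h \<in> H"
  shows "shift h (glue H D z p) = glue H D z p"
proof
  fix k
  have H_closed: "a + b \<in> H" "- a \<in> H" if "a \<in> H" "b \<in> H" for a b
    using H that unfolding is_subgroup_def by auto
  have shift_inside: "- h' + (- h + k) = - (h + h') + k" for h'
    by (simp add: minus_add add.assoc del: add_uminus_conv_diff)
  show "shift h (glue H D z p) k = glue H D z p k"
  proof (cases "\<exists>h'\<in>H. - h' + k \<in> D")
    case True
    then obtain h' where h': "h' \<in> H" "- h' + k \<in> D" by blast
    have "- (- h + h') + (- h + k) = - h' + k" by (simp add: minus_add add.assoc)
    then have "glue H D z p (- h + k) = z (- h' + k)"
      using glue_translate[OF H sep, where h = "- h + h'"] h h' H_closed by metis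
    then show ?thesis using glue_translate[OF H sep h'] by (metis shift_def)
  next
    case False
    then have "\<not> (\<exists>h'\<in>H. - h' + (- h + k) \<in> D)"
      unfolding shift_inside using h H_closed by blast
    then show ?thesis
      using False glue_outside p[OF h] by (metis shift_def)
  qed
qed

lemma glue_mem:
  assumes X: "\<And>x. x \<in> X \<longleftrightarrow> (\<forall>a. (\<lambda>w\<in>\<Omega>. x (a + w)) \<in> P)"
    and H: "is_subgroup H"
    and sep: "\<And>d d'. d \<in> D \<Longrightarrow> d' \<in> D \<Longrightarrow> d + - d' \<in> H \<Longrightarrow> d = d'"
    and collar: "\<And>c w w'. c \<in> C \<Longrightarrow> w \<in> \<Omega> \<Longrightarrow> w' \<in> \<Omega> \<Longrightarrow> c + - w + w' \<in> D"
    and "z \<in> X" "p \<in> X"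
    and p: "\<And>h. h \<in> H \<Longrightarrow> shift h p = p"
    and zp: "\<And>k. k \<in> D - C \<Longrightarrow> z k = p k"
  shows "glue H D z p \<in> X"
  unfolding X
proof
  fix a
  show "(\<lambda>w\<in>\<Omega>. glue H D z p (a + w)) \<in> P"
  proof (cases "\<exists>w\<in>\<Omega>. \<exists>h\<in>H. - h + (a + w) \<in> C")
    case True
    then obtain w h where wh: "w \<in> \<Omega>" "h \<in> H" "- h + (a + w) \<in> C" by blast
    have "glue H D z p (a + w') = z (- h + a + w')" if "w' \<in> \<Omega>" for w'
    proof -
      have "- h + (a + w') = (- h + (a + w)) + - w + w'" by (simp add: add.assoc del: add_uminus_conv_diff)
      then have "- h + (a + w') \<in> D" using collar wh that by metis
      then show ?thesis using glue_translate[OF H sep wh(2)] by (simp add: add.assoc)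
    qed
    then have "(\<lambda>w\<in>\<Omega>. glue H D z p (a + w)) = (\<lambda>w\<in>\<Omega>. z (- h + a + w))" by auto
    then show ?thesis using \<open>z \<in> X\<close> X by metis
  next
    case False
    have "glue H D z p (a + w') = p (a + w')" if "w' \<in> \<Omega>" for w'
    proof (cases "\<exists>h\<in>H. - h + (a + w') \<in> D")
      case True
      then obtain h where h: "h \<in> H" "- h + (a + w') \<in> D" by blast
      with False that have "- h + (a + w') \<in> D - C" by blast
      then show ?thesis
        using glue_translate[OF H sep h] zp p[OF h(1)] by (metis shift_def)
    qed (rule glue_outside)
    then have "(\<lambda>w\<in>\<Omega>. glue H D z p (a + w)) = (\<lambda>w\<in>\<Omega>. p (a + w))" by auto
    then show ?thesis using \<open>p \<in> X\<close> X by metis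
  qed
qed

lemma periodic_approximation:
  fixes X :: "('g::group_add \<Rightarrow> 'a) set"
  assumes "residually_finite TYPE('g)"
    and "finite \<Omega>" and X: "\<And>x. x \<in> X \<longleftrightarrow> (\<forall>a. (\<lambda>w\<in>\<Omega>. x (a + w)) \<in> P)"
    and "finite \<Delta>" "irreducible_wrt \<Delta> X"
    and "x \<in> X" "p \<in> X" "periodic_config p" "finite F"
  shows "\<exists>y\<in>X. periodic_config y \<and> (\<forall>k\<in>F. y k = x k)"
proof -
  define C where "C = F \<union> {a + - d | a d. a \<in> F \<and> d \<in> \<Delta>}"
  \<comment> \<open>\<open>D - C\<close> is \<open>\<Delta>\<close>-separated from \<open>F\<close>, and every pattern window meeting \<open>C\<close> lies in \<open>D\<close>.\<close>
  define D where "D = C \<union> {c + - w + w' | c w w'. c \<in> C \<and> w \<in> \<Omega> \<and> w' \<in> \<Omega>}"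
  have "finite C"
    unfolding C_def using \<open>finite F\<close> \<open>finite \<Delta>\<close> by (simp add: finite_image_set2)
  have "{c + - w + w' | c w w'. c \<in> C \<and> w \<in> \<Omega> \<and> w' \<in> \<Omega>} =
        (\<lambda>(c, w, w'). c + - w + w') ` (C \<times> \<Omega> \<times> \<Omega>)"
    by (auto simp: image_iff) blast
  then have "finite D" unfolding D_def using \<open>finite C\<close> \<open>finite \<Omega>\<close> by simp
  have "{a + - d | a d. a \<in> F \<and> d \<in> \<Delta>} \<inter> (D - C) = {}" unfolding C_def by auto
  then obtain z where z: "z \<in> X" "restrict z F = restrict x F" "restrict z (D - C) = restrict p (D - C)"
    using assms(5)[unfolded irreducible_wrt_def, rule_format, of F "D - C" x p] assms(6,7)
      \<open>finite F\<close> \<open>finite D\<close> by blast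
  define differences where "differences = {a + - b | a b. a \<in> D \<and> b \<in> D}"
  have "finite (differences - {0})"
    unfolding differences_def using \<open>finite D\<close> by (simp add: finite_image_set2)
  then obtain H0 where H0: "is_subgroup H0" "finite_index H0" "H0 \<inter> (differences - {0}) = {}"
    using residually_finite_subgroup_avoiding[OF assms(1)] by blast
  define H where "H = H0 \<inter> {g. shift g p = p}"
  have H: "is_subgroup H" "finite_index H" unfolding H_def
    by (rule is_subgroup_Int[OF H0(1) is_subgroup_stabiliser],
        rule finite_index_Int[OF H0(2) finite_index_stabiliser[OF \<open>periodic_config p\<close>]])
  have p_inv: "shift h p = p" if "h \<in> H" for h using that unfolding H_def by blast
  have sep: "d = d'" if "d \<in> D" "d' \<in> D" "d + - d' \<in> H" for d d'
  proof -
    have "d + - d' \<in> differences" unfolding differences_def using that(1,2) by blast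
    moreover have "d + - d' \<in> H0" using that(3) unfolding H_def by blast
    ultimately have "d + - d' = 0" using H0(3) by blast
    then show ?thesis by simp
  qed
  define y where "y = glue H D z p"
  have "y \<in> X"
    unfolding y_def
  proof (rule glue_mem[OF X H(1) sep _ z(1) \<open>p \<in> X\<close> p_inv])
    show "c + - w + w' \<in> D" if "c \<in> C" "w \<in> \<Omega>" "w' \<in> \<Omega>" for c w w'
      unfolding D_def using that by blast
    show "z k = p k" if "k \<in> D - C" for k using z(3) that by (metis restrict_apply')
  qed
  moreover have "periodic_config y"
    unfolding y_def by (rule periodic_configI[OF H shift_glue[OF H(1) sep p_inv]])
  moreover have "y k = x k" if "k \<in> F" for k
  proof -
    have "0 \<in> H" using H(1) unfolding is_subgroup_def by blast
    moreover have "- 0 + k \<in> D" using that unfolding D_def C_def by simp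
    ultimately have "y k = z k" unfolding y_def using glue_translate[OF H(1) sep] by fastforce
    also have "\<dots> = x k" using z(2) that by (metis restrict_apply')
    finally show ?thesis .
  qed
  ultimately show ?thesis by blast
qed

theorem theorem1p1:
  fixes X :: "('g::group_add \<Rightarrow> 'a::finite) set"
  assumes "residually_finite TYPE('g)"
    and "subshift X" and "finite_type X" and "strongly_irreducible X"
    and "\<exists>x\<in>X. periodic_config x"
  shows "X \<subseteq> prodiscrete closure_of {x\<in>X. periodic_config x}"
proof
  obtain \<Omega> P where "finite \<Omega>" and X: "\<And>x. x \<in> X \<longleftrightarrow> (\<forall>a. (\<lambda>w\<in>\<Omega>. x (a + w)) \<in> P)"
    using finite_type_windowE[OF assms(3)] by blast
  obtain \<Delta> where "finite \<Delta>" "irreducible_wrt \<Delta> X"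
    using assms(4) unfolding strongly_irreducible_def by blast
  obtain p where "p \<in> X" "periodic_config p" using assms(5) by blast
  fix x assume "x \<in> X"
  show "x \<in> prodiscrete closure_of {x\<in>X. periodic_config x}"
  proof (rule in_prodiscrete_closure_ofI)
    fix F :: "'g set" assume "finite F"
    then show "\<exists>y\<in>{x\<in>X. periodic_config x}. \<forall>k\<in>F. y k = x k"
      using periodic_approximation[OF assms(1) \<open>finite \<Omega>\<close> X \<open>finite \<Delta>\<close> \<open>irreducible_wrt \<Delta> X\<close>
          \<open>x \<in> X\<close> \<open>p \<in> X\<close> \<open>periodic_config p\<close>] by blast
  qed
qed

end
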